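(* Let $I$ be an index set, $S,T\in GL(2,\mathbb R)$, and for $r\in I$ let $P_r=S\,\mathrm{diag}\{p_{1r},p_{2r}\}S^{-1}$, $Q_r=T\,\mathrm{diag}\{q_{1r},q_{2r}\}T^{-1}$ with all $p_{kr},q_{kr}$ nonzero real numbers. There exists a homeomorphism $f\colon\overline{\mathbb R}\to\overline{\mathbb R}$ with $f(P_r(x))=Q_r(f(x))$ for all $x\in\overline{\mathbb R}$, $r\in I$, if and only if there exists a real number $\alpha\neq-1$ such that $$\frac{q_{1r}}{q_{2r}}=\frac{p_{1r}}{p_{2r}}\Bigl|\frac{p_{1r}}{p_{2r}}\Bigr|^{\alpha}\quad\text{for all }r\in I.$$
   Context: $\overline{\mathbb R}=\mathbb R\cup\{\infty\}$ is the extended real line (real projective line). A matrix $\begin{pmatrix}a&b\\c&d\end{pmatrix}\in GL(2,\mathbb R)$ acts on $\overline{\mathbb R}$ by $x\mapsto\frac{ax+b}{cx+d}$. *)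

theory Defs
  imports "HOL-Analysis.Analysis"
begin

datatype pline = Fin real | Infty

text \<open>Its usual topology (one-point compactification of the reals): a set is open iff its
  finite part is open in \<open>\<real>\<close> and, if it contains \<open>\<infinity>\<close>, it contains all
  \<open>x\<close> with \<open>|x|\<close> large.\<close>
instantiation pline :: topological_space
begin

definition open_pline :: "pline set \<Rightarrow> bool" where
  "open_pline U \<longleftrightarrow> open {x. Fin x \<in> U} \<and>
     (Infty \<in> U \<longrightarrow> (\<exists>R. \<forall>x. \<bar>x\<bar> > R \<longrightarrow> Fin x \<in> U))"

instance
proof
  show "open (UNIV :: pline set)" by (simp add: open_pline_def)
next
  fix U V :: "pline set"
  assume U: "open U" and V: "open V"
  have "{x. Fin x \<in> U \<inter> V} = {x. Fin x \<in> U} \<inter> {x. Fin x \<in> V}" by auto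
  moreover have "Infty \<in> U \<inter> V \<longrightarrow> (\<exists>R. \<forall>x. \<bar>x\<bar> > R \<longrightarrow> Fin x \<in> U \<inter> V)"
  proof
    assume "Infty \<in> U \<inter> V"
    then obtain R1 R2 where "\<forall>x. \<bar>x\<bar> > R1 \<longrightarrow> Fin x \<in> U" "\<forall>x. \<bar>x\<bar> > R2 \<longrightarrow> Fin x \<in> V"
      using U V unfolding open_pline_def by blast
    then show "\<exists>R. \<forall>x. \<bar>x\<bar> > R \<longrightarrow> Fin x \<in> U \<inter> V"
      by (intro exI[of _ "max R1 R2"]) auto
  qed
  ultimately show "open (U \<inter> V)" using U V unfolding open_pline_def by auto
next
  fix K :: "pline set set"
  assume K: "\<forall>S\<in>K. open S"
  have "{x. Fin x \<in> \<Union>K} = (\<Union>S\<in>K. {x. Fin x \<in> S})" by auto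
  hence "open {x. Fin x \<in> \<Union>K}" using K unfolding open_pline_def by auto
  moreover have "Infty \<in> \<Union>K \<longrightarrow> (\<exists>R. \<forall>x. \<bar>x\<bar> > R \<longrightarrow> Fin x \<in> \<Union>K)"
    using K unfolding open_pline_def by blast
  ultimately show "open (\<Union>K)" unfolding open_pline_def by blast
qed

end

fun mobius :: "real^2^2 \<Rightarrow> pline \<Rightarrow> pline" where
  "mobius M (Fin x) =
     (if M$2$1 * x + M$2$2 = 0 then Infty
      else Fin ((M$1$1 * x + M$1$2) / (M$2$1 * x + M$2$2)))"
| "mobius M Infty = (if M$2$1 = 0 then Infty else Fin (M$1$1 / M$2$1))"

definition diag2 :: "real \<Rightarrow> real \<Rightarrow> real^2^2" where
  "diag2 a b = vector [vector [a, 0], vector [0, b]]"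

end

theory Submission
  imports Defs
begin

(* Write l r = p1 r / p2 r and m r = q1 r / q2 r.  The Moebius map of S conjugates the scaling
   x \<mapsto> l r * x of the extended line to the map of S diag(p1 r, p2 r) S^-1, and likewise for T.
   Topological conjugacy of families of self-maps is an equivalence relation, so the theorem
   reduces to the statement that the scaling families l and m are topologically conjugate iff
   m r = sgn (l r) * |l r| powr g for some g \<noteq> 0 (the paper's alpha is g - 1).
   - If: the signed power map x \<mapsto> sgn x * |x| powr g with g > 0, fixing infinity, is a
     conjugacy; for g < 0 it is composed with the inversion x \<mapsto> 1/x.
   - Only if: when all |l r| = 1 a direct argument gives m = l.  Otherwise a conjugacy h has to
     permute {0, infinity}, hence restricts to a homeomorphism k of the punctured line with
     k (l r * y) = m r * k y.  Continuity forces sgn (m r) = sgn (l r), and the map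
     K u = ln |k (exp u)| is strictly monotone and carries translation by 2 ln |l r| to
     translation by 2 ln |m r|; a monotone map intertwining translations multiplies all
     translation lengths by one common factor g. *)

section \<open>The action of 2x2 matrices on the extended line\<close>

lemma matrix_mult_entry_2: "((A::real^2^2) ** B)$i$j = A$i$1 * B$1$j + A$i$2 * B$2$j"
  by (simp add: matrix_matrix_mult_def sum_2)

lemma mobius_mult:
  fixes A B :: "real^2^2"
  assumes dA: "det A \<noteq> 0" and dB: "det B \<noteq> 0"
  shows "mobius (A ** B) x = mobius A (mobius B x)"
proof -
  define a where "a = A$1$1" define b where "b = A$1$2"
  define c where "c = A$2$1" define d where "d = A$2$2"
  define a' where "a' = B$1$1" define b' where "b' = B$1$2"
  define c' where "c' = B$2$1" define d' where "d' = B$2$2"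
  have e: "(A**B)$1$1 = a*a'+b*c'" "(A**B)$1$2 = a*b'+b*d'"
     "(A**B)$2$1 = c*a'+d*c'" "(A**B)$2$2 = c*b'+d*d'"
    by (simp_all add: matrix_mult_entry_2 a_def b_def c_def d_def a'_def b'_def c'_def d'_def)
  have dB': "a'*d' - b'*c' \<noteq> 0" using dB by (simp add: det_2 a'_def b'_def c'_def d'_def)
  note defs = a_def[symmetric] b_def[symmetric] c_def[symmetric] d_def[symmetric]
     a'_def[symmetric] b'_def[symmetric] c'_def[symmetric] d'_def[symmetric]
  show ?thesis
  proof (cases x)
    case (Fin y)
    define u where "u = a'*y+b'"
    define v where "v = c'*y+d'"
    have den: "(c * a' + d * c') * y + (c * b' + d * d') = c * u + d * v"
      by (simp add: u_def v_def algebra_simps)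
    have num: "(a * a' + b * c') * y + (a * b' + b * d') = a * u + b * v"
      by (simp add: u_def v_def algebra_simps)
    show ?thesis
    proof (cases "v = 0")
      case True
      \<comment> \<open>a pole of B is not a zero of its numerator, since det B \<noteq> 0\<close>
      have "d' = - (c' * y)" using True by (simp add: v_def)
      hence "a' * d' - b' * c' = - c' * u" by (simp add: u_def algebra_simps)
      hence "u \<noteq> 0" using dB' by auto
      then show ?thesis using True Fin
        by (simp add: e den num defs v_def[symmetric] u_def[symmetric])
    next
      case False
      have 1: "c * u / v + d = (c * u + d * v) / v" using False by (simp add: field_simps)
      have 2: "a * u / v + b = (a * u + b * v) / v" using False by (simp add: field_simps)
      show ?thesis using False Fin
        by (simp add: e den num defs v_def[symmetric] u_def[symmetric] 1 2)
    qed
  next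
    case Infty
    show ?thesis
    proof (cases "c' = 0")
      case True
      then have "a' \<noteq> 0" using dB' by auto
      then show ?thesis using True Infty by (simp add: e defs)
    next
      case False
      have 1: "d + c * a' / c' = (c * a' + d * c') / c'" using False by (simp add: field_simps)
      have 2: "b + a * a' / c' = (a * a' + b * c') / c'" using False by (simp add: field_simps)
      show ?thesis using False Infty by (simp add: e defs 1 2 add.commute)
    qed
  qed
qed

lemma mobius_mat1: "mobius (mat 1) x = x"
  by (cases x) (auto simp: mat_def)

lemma matrix_inv_2:
  assumes "invertible (A::real^2^2)"
  shows "A ** matrix_inv A = mat 1" and "matrix_inv A ** A = mat 1"
proof -
  have "\<exists>A'::real^2^2. A ** A' = mat 1 \<and> A' ** A = mat 1"
    using assms by (simp add: invertible_def)
  hence "A ** matrix_inv A = mat 1 \<and> matrix_inv A ** A = mat 1"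
    unfolding matrix_inv_def by (rule someI_ex)
  thus "A ** matrix_inv A = mat 1" "matrix_inv A ** A = mat 1" by auto
qed

lemma det_matrix_inv_nz:
  assumes "invertible (A::real^2^2)" shows "det (matrix_inv A) \<noteq> 0"
proof -
  have "invertible (matrix_inv A)"
    using matrix_inv_2[OF assms] unfolding invertible_def by blast
  thus ?thesis by (simp add: invertible_det_nz)
qed

lemma mobius_matrix_inv:
  assumes "invertible A"
  shows "mobius A (mobius (matrix_inv A) x) = x" and "mobius (matrix_inv A) (mobius A x) = x"
  using assms by (simp_all add: mobius_mult[symmetric] det_matrix_inv_nz invertible_det_nz
      matrix_inv_2 mobius_mat1)

fun scale :: "real \<Rightarrow> pline \<Rightarrow> pline" where
  "scale l (Fin x) = Fin (l * x)"
| "scale l Infty = Infty"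

lemma scale_1 [simp]: "scale 1 x = x"
  by (cases x) simp_all

lemma scale_scale: "scale a (scale b x) = scale (a * b) x"
  by (cases x) simp_all

lemma diag2_entries:
  "diag2 a b $1$1 = a" "diag2 a b $1$2 = 0" "diag2 a b $2$1 = 0" "diag2 a b $2$2 = b"
  by (simp_all add: diag2_def)

lemma mobius_diag2: "q \<noteq> 0 \<Longrightarrow> mobius (diag2 p q) x = scale (p / q) x"
  by (cases x) (simp_all add: diag2_entries)

lemma mobius_conj_diag2:
  assumes "invertible S" "p \<noteq> 0" "q \<noteq> 0"
  shows "mobius (S ** diag2 p q ** matrix_inv S) (mobius S x) = mobius S (scale (p / q) x)"
proof -
  have d: "det S \<noteq> 0" "det (matrix_inv S) \<noteq> 0" "det (diag2 p q) \<noteq> 0"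
    using assms invertible_det_nz det_matrix_inv_nz by (auto simp: det_2[of "diag2 p q"] diag2_entries)
  have "mobius (S ** diag2 p q ** matrix_inv S) (mobius S x)
      = mobius (S ** diag2 p q ** matrix_inv S ** S) x"
    using d by (simp add: mobius_mult det_mul)
  also have "S ** diag2 p q ** matrix_inv S ** S = S ** diag2 p q"
    by (simp add: matrix_mul_assoc[symmetric] matrix_inv_2[OF assms(1)])
  also have "mobius (S ** diag2 p q) x = mobius S (scale (p / q) x)"
    using d assms by (simp add: mobius_mult mobius_diag2)
  finally show ?thesis .
qed

section \<open>Topology of the extended line\<close>

definition inv_chart :: "real \<Rightarrow> pline" where
  "inv_chart y = (if y = 0 then Infty else Fin (1 / y))"

lemma open_Fin_vimage: "open U \<Longrightarrow> open (Fin -` U)"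
  by (simp add: open_pline_def vimage_def)

lemma open_inv_chart_vimage:
  assumes U: "open (U::pline set)" shows "open (inv_chart -` U)"
proof -
  define A where "A = (-{0}) \<inter> (\<lambda>y::real. 1/y) -` (Fin -` U)"
  have "continuous_on (-{0::real}) (\<lambda>y. 1/y)" by (intro continuous_intros) auto
  hence oA: "open A"
    unfolding A_def using open_Fin_vimage[OF U] by (intro continuous_open_preimage) auto
  show ?thesis
  proof (cases "Infty \<in> U")
    case False
    have "inv_chart -` U = A" using False by (auto simp: A_def inv_chart_def split: if_splits)
    thus ?thesis using oA by simp
  next
    case True
    then obtain R where R: "\<forall>x. \<bar>x\<bar> > R \<longrightarrow> Fin x \<in> U" using U by (auto simp: open_pline_def)
    define R' where "R' = max R 1"
    have R'pos: "R' > 0" by (simp add: R'_def)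
    have ball: "ball 0 (1/R') \<subseteq> inv_chart -` U"
    proof
      fix y :: real assume y: "y \<in> ball 0 (1/R')"
      show "y \<in> inv_chart -` U"
      proof (cases "y = 0")
        case True thus ?thesis using \<open>Infty \<in> U\<close> by (simp add: inv_chart_def)
      next
        case False
        have "R' < 1/\<bar>y\<bar>" using False y R'pos by (simp add: field_simps)
        hence "\<bar>1/y\<bar> > R" by (simp add: R'_def)
        thus ?thesis using R False by (simp add: inv_chart_def)
      qed
    qed
    have "inv_chart -` U = A \<union> ball 0 (1/R')"
      using ball True R'pos by (auto simp: A_def inv_chart_def split: if_splits)
    thus ?thesis using oA by auto
  qed
qed

lemma open_pline_iff: "open (U::pline set) \<longleftrightarrow> open (Fin -` U) \<and> open (inv_chart -` U)"
proof
  assume "open U"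
  thus "open (Fin -` U) \<and> open (inv_chart -` U)" using open_Fin_vimage open_inv_chart_vimage by auto
next
  assume a: "open (Fin -` U) \<and> open (inv_chart -` U)"
  have "\<exists>R. \<forall>x. \<bar>x\<bar> > R \<longrightarrow> Fin x \<in> U" if "Infty \<in> U"
  proof -
    have "0 \<in> inv_chart -` U" using that by (simp add: inv_chart_def)
    then obtain e where e: "e > 0" "ball 0 e \<subseteq> inv_chart -` U" using a open_contains_ball by blast
    show ?thesis
    proof (intro exI[of _ "1/e"] allI impI)
      fix x :: real assume x: "\<bar>x\<bar> > 1/e"
      hence "x \<noteq> 0" using e by auto
      have "\<bar>1/x\<bar> < e" using x e \<open>x \<noteq> 0\<close> by (simp add: field_simps)
      hence "1/x \<in> ball 0 e" by (simp add: dist_real_def)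
      hence "1/x \<in> inv_chart -` U" using e(2) by blast
      thus "Fin x \<in> U" using \<open>x \<noteq> 0\<close> by (simp add: inv_chart_def)
    qed
  qed
  thus "open U" using a by (auto simp: open_pline_def vimage_def)
qed

lemma continuous_Fin: "continuous_on UNIV Fin"
  by (simp add: continuous_on_open_vimage open_Fin_vimage)

lemma continuous_inv_chart: "continuous_on UNIV inv_chart"
  by (simp add: continuous_on_open_vimage open_inv_chart_vimage)

lemma continuous_on_pline:
  fixes F :: "pline \<Rightarrow> pline"
  assumes "continuous_on UNIV (F \<circ> Fin)" "continuous_on UNIV (F \<circ> inv_chart)"
  shows "continuous_on UNIV F"
proof -
  have "open (F -` B)" if "open B" for B
  proof -
    have "open ((F \<circ> Fin) -` B)" "open ((F \<circ> inv_chart) -` B)"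
      using assms that by (simp_all add: continuous_on_open_vimage comp_def)
    thus ?thesis unfolding open_pline_iff by (simp add: vimage_comp)
  qed
  thus ?thesis by (simp add: continuous_on_open_vimage)
qed

definition lin_frac :: "real \<Rightarrow> real \<Rightarrow> real \<Rightarrow> real \<Rightarrow> real \<Rightarrow> pline" where
  "lin_frac a b c d y = (if c * y + d = 0 then Infty else Fin ((a * y + b) / (c * y + d)))"

text \<open>Where the denominator vanishes, the numerator does not, so the map is continuous
  there when read in the chart at infinity.\<close>
lemma continuous_lin_frac:
  assumes det: "a * d - b * c \<noteq> 0"
  shows "continuous_on UNIV (lin_frac a b c d)"
proof -
  define A1 where "A1 = {y::real. c * y + d \<noteq> 0}"
  define A2 where "A2 = {y::real. a * y + b \<noteq> 0}"
  have o1: "open A1" unfolding A1_def by (intro open_Collect_neq continuous_intros)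
  have o2: "open A2" unfolding A2_def by (intro open_Collect_neq continuous_intros)
  have cover: "A1 \<union> A2 = UNIV"
  proof (rule ccontr)
    assume "A1 \<union> A2 \<noteq> UNIV"
    then obtain y where "c * y + d = 0" "a * y + b = 0" by (auto simp: A1_def A2_def)
    hence "a * (c * y + d) - c * (a * y + b) = 0" by simp
    hence "a * d - b * c = 0" by (simp add: algebra_simps)
    thus False using det by simp
  qed
  have c1: "continuous_on A1 (lin_frac a b c d)"
  proof -
    have "continuous_on A1 (\<lambda>y. Fin ((a * y + b) / (c * y + d)))"
      by (rule continuous_on_compose2[OF continuous_Fin _ subset_UNIV])
         (intro continuous_intros, auto simp: A1_def)
    thus ?thesis by (rule continuous_on_cong[THEN iffD1, rotated 2]) (auto simp: lin_frac_def A1_def)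
  qed
  have c2: "continuous_on A2 (lin_frac a b c d)"
  proof -
    have "continuous_on A2 (\<lambda>y. inv_chart ((c * y + d) / (a * y + b)))"
      by (rule continuous_on_compose2[OF continuous_inv_chart _ subset_UNIV])
         (intro continuous_intros, auto simp: A2_def)
    thus ?thesis
      by (rule continuous_on_cong[THEN iffD1, rotated 2]) (auto simp: lin_frac_def A2_def inv_chart_def)
  qed
  show ?thesis using continuous_on_open_Un[OF o1 o2 c1 c2] cover by simp
qed

lemma mobius_comp_Fin: "mobius M \<circ> Fin = lin_frac (M$1$1) (M$1$2) (M$2$1) (M$2$2)"
  by (rule ext) (simp add: lin_frac_def)

lemma mobius_comp_inv_chart: "mobius M \<circ> inv_chart = lin_frac (M$1$2) (M$1$1) (M$2$2) (M$2$1)"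
proof (rule ext)
  fix y :: real
  show "(mobius M \<circ> inv_chart) y = lin_frac (M$1$2) (M$1$1) (M$2$2) (M$2$1) y"
  proof (cases "y = 0")
    case True thus ?thesis by (simp add: lin_frac_def inv_chart_def)
  next
    case False
    have 1: "M$2$1 * (1/y) + M$2$2 = (M$2$2 * y + M$2$1) / y" using False by (simp add: field_simps)
    have 2: "M$1$1 * (1/y) + M$1$2 = (M$1$2 * y + M$1$1) / y" using False by (simp add: field_simps)
    show ?thesis using False
      by (simp add: lin_frac_def inv_chart_def 1 2 del: times_divide_eq_right)
  qed
qed

lemma continuous_mobius:
  assumes "det M \<noteq> 0" shows "continuous_on UNIV (mobius M)"
proof (rule continuous_on_pline)
  have d: "M$1$1 * M$2$2 - M$1$2 * M$2$1 \<noteq> 0" using assms by (simp add: det_2)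
  show "continuous_on UNIV (mobius M \<circ> Fin)"
    unfolding mobius_comp_Fin by (rule continuous_lin_frac) (use d in simp)
  show "continuous_on UNIV (mobius M \<circ> inv_chart)"
    unfolding mobius_comp_inv_chart by (rule continuous_lin_frac) (use d in \<open>simp add: algebra_simps\<close>)
qed

lemma homeomorphism_UNIV_I:
  assumes "continuous_on UNIV f" "continuous_on UNIV g" "\<And>x. g (f x) = x" "\<And>y. f (g y) = y"
  shows "homeomorphism UNIV UNIV f g"
  using assms by (intro homeomorphismI) (auto intro: image_eqI[of _ f, OF sym[OF assms(4)]])

lemma homeomorphism_mobius:
  assumes "invertible A" shows "homeomorphism UNIV UNIV (mobius A) (mobius (matrix_inv A))"
  using assms
  by (intro homeomorphism_UNIV_I continuous_mobius)
     (simp_all add: invertible_det_nz det_matrix_inv_nz mobius_matrix_inv)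

definition top_conjugate ::
  "'i set \<Rightarrow> ('i \<Rightarrow> 'a::topological_space \<Rightarrow> 'a) \<Rightarrow> ('i \<Rightarrow> 'b::topological_space \<Rightarrow> 'b) \<Rightarrow> bool"
  where "top_conjugate I A B \<longleftrightarrow>
    (\<exists>h h'. homeomorphism UNIV UNIV h h' \<and> (\<forall>r\<in>I. \<forall>x. h (A r x) = B r (h x)))"

lemma top_conjugate_sym:
  assumes "top_conjugate I A B" shows "top_conjugate I B A"
proof -
  obtain h h' where hom: "homeomorphism UNIV UNIV h h'" and eq: "\<forall>r\<in>I. \<forall>x. h (A r x) = B r (h x)"
    using assms by (auto simp: top_conjugate_def)
  have "h' (B r y) = A r (h' y)" if "r \<in> I" for r y
  proof -
    have "h' (B r y) = h' (B r (h (h' y)))" using homeomorphism_apply2[OF hom] by simp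
    also have "\<dots> = h' (h (A r (h' y)))" using eq that by simp
    also have "\<dots> = A r (h' y)" using homeomorphism_apply1[OF hom] by simp
    finally show ?thesis .
  qed
  thus ?thesis using homeomorphism_symD[OF hom] by (auto simp: top_conjugate_def)
qed

lemma top_conjugate_trans:
  assumes "top_conjugate I A B" "top_conjugate I B C" shows "top_conjugate I A C"
proof -
  obtain h h' where "homeomorphism UNIV UNIV h h'" "\<forall>r\<in>I. \<forall>x. h (A r x) = B r (h x)"
    using assms(1) by (auto simp: top_conjugate_def)
  moreover obtain g g' where "homeomorphism UNIV UNIV g g'" "\<forall>r\<in>I. \<forall>x. g (B r x) = C r (g x)"
    using assms(2) by (auto simp: top_conjugate_def)
  ultimately show ?thesis
    unfolding top_conjugate_def by (intro exI[of _ "g \<circ> h"] exI[of _ "h' \<circ> g'"])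
      (auto intro: homeomorphism_compose)
qed

lemma top_conjugate_scale_mobius:
  assumes "invertible S" and "\<forall>r\<in>I. p r \<noteq> 0 \<and> q r \<noteq> 0"
  shows "top_conjugate I (\<lambda>r. scale (p r / q r)) (\<lambda>r. mobius (S ** diag2 (p r) (q r) ** matrix_inv S))"
  unfolding top_conjugate_def
  using homeomorphism_mobius[OF assms(1)] mobius_conj_diag2[OF assms(1)] assms(2) by metis

section \<open>Signed powers and the sufficiency of the power relation\<close>

definition spow :: "real \<Rightarrow> real \<Rightarrow> real" where
  "spow g x = sgn x * \<bar>x\<bar> powr g"

lemma spow_eq_0_iff [simp]: "spow g x = 0 \<longleftrightarrow> x = 0"
  by (simp add: spow_def sgn_zero_iff)

lemma spow_mult: "spow g (a * b) = spow g a * spow g b"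
  by (simp add: spow_def sgn_mult abs_mult powr_mult)

lemma spow_recip: "spow g (1 / y) = 1 / spow g y"
proof (cases y "0::real" rule: linorder_cases)
  case less
  have "(- (1 / y)) powr g = 1 / (- y) powr g" using powr_divide[of 1 "-y" g] less by simp
  thus ?thesis using less by (simp add: spow_def)
qed (simp_all add: spow_def powr_divide abs_divide)

lemma spow_uminus: "spow (- g) x = 1 / spow g x"
  by (cases x "0::real" rule: linorder_cases) (simp_all add: spow_def powr_minus divide_inverse)

lemma spow_spow_inverse: assumes "g \<noteq> 0" shows "spow (1 / g) (spow g x) = x"
proof -
  have "sgn (spow g x) = sgn x" by (cases "x = 0") (auto simp: spow_def sgn_mult)
  moreover have "\<bar>spow g x\<bar> = \<bar>x\<bar> powr g" by (simp add: spow_def abs_mult)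
  ultimately show ?thesis using assms
    by (cases "x = 0") (simp_all add: spow_def powr_powr sgn_mult_abs)
qed

lemma mult_abs_powr_eq_spow: "l \<noteq> 0 \<Longrightarrow> l * \<bar>l\<bar> powr a = spow (1 + a) l"
  by (simp add: spow_def powr_add mult.assoc[symmetric] sgn_mult_abs)

lemma continuous_spow: assumes "g > 0" shows "continuous_on UNIV (spow g)"
proof -
  have nonneg: "continuous_on {0..} (spow g)"
  proof -
    have "continuous_on {0..} (\<lambda>x::real. x powr g)"
      using assms by (intro continuous_on_powr' continuous_intros) auto
    thus ?thesis by (rule continuous_on_cong[THEN iffD1, rotated 2]) (auto simp: spow_def sgn_if)
  qed
  have nonpos: "continuous_on {..0} (spow g)"
  proof -
    have "continuous_on {..0} (\<lambda>x::real. - ((-x) powr g))"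
      using assms by (intro continuous_on_powr' continuous_intros) auto
    thus ?thesis by (rule continuous_on_cong[THEN iffD1, rotated 2]) (auto simp: spow_def sgn_if)
  qed
  have "{0::real..} \<union> {..0} = UNIV" by auto
  thus ?thesis using continuous_on_closed_Un[OF closed_atLeast closed_atMost nonneg nonpos] by simp
qed

fun spow_ext :: "real \<Rightarrow> pline \<Rightarrow> pline" where
  "spow_ext g (Fin x) = Fin (spow g x)"
| "spow_ext g Infty = Infty"

lemma homeomorphism_spow_ext:
  assumes "g > 0" shows "homeomorphism UNIV UNIV (spow_ext g) (spow_ext (1 / g))"
proof -
  have cont: "continuous_on UNIV (spow_ext e)" if "e > 0" for e
  proof (rule continuous_on_pline)
    have "spow_ext e \<circ> Fin = Fin \<circ> spow e" by auto
    thus "continuous_on UNIV (spow_ext e \<circ> Fin)"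
      using continuous_on_compose[OF continuous_spow[OF that]] continuous_Fin by (metis image_subset_iff
          continuous_on_subset subset_UNIV)
    have "spow_ext e \<circ> inv_chart = inv_chart \<circ> spow e"
      by (rule ext) (simp add: inv_chart_def spow_recip)
    thus "continuous_on UNIV (spow_ext e \<circ> inv_chart)"
      using continuous_on_compose[OF continuous_spow[OF that]] continuous_inv_chart
      by (metis continuous_on_subset subset_UNIV)
  qed
  have inverse: "spow_ext (1 / e) (spow_ext e x) = x" if "e \<noteq> 0" for e x
    using that by (cases x) (simp_all add: spow_spow_inverse)
  show ?thesis
    using assms cont[of g] cont[of "1 / g"] inverse[of g] inverse[of "1 / g"]
    by (intro homeomorphism_UNIV_I) simp_all
qed

lemma spow_ext_scale: "spow_ext g (scale l x) = scale (spow g l) (spow_ext g x)"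
  by (cases x) (simp_all add: spow_mult)

definition flip2 :: "real^2^2" where
  "flip2 = vector [vector [0, 1], vector [1, 0]]"

lemma flip2_entries: "flip2 $1$1 = 0" "flip2 $1$2 = 1" "flip2 $2$1 = 1" "flip2 $2$2 = 0"
  by (simp_all add: flip2_def)

lemma invertible_flip2: "invertible flip2"
  by (simp add: invertible_det_nz det_2 flip2_entries)

lemma mobius_flip2_scale: "l \<noteq> 0 \<Longrightarrow> mobius flip2 (scale l x) = scale (1 / l) (mobius flip2 x)"
  by (cases x) (simp_all add: flip2_entries)

lemma top_conjugate_scale_inverse:
  assumes "\<forall>r\<in>I. l r \<noteq> 0 \<and> m r = 1 / l r"
  shows "top_conjugate I (\<lambda>r. scale (l r)) (\<lambda>r. scale (m r))"
  unfolding top_conjugate_def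
  using homeomorphism_mobius[OF invertible_flip2] mobius_flip2_scale assms by metis

lemma top_conjugate_scale_spow:
  assumes "g > 0" and "\<forall>r\<in>I. m r = spow g (l r)"
  shows "top_conjugate I (\<lambda>r. scale (l r)) (\<lambda>r. scale (m r))"
  unfolding top_conjugate_def
  using homeomorphism_spow_ext[OF assms(1)] spow_ext_scale assms(2) by metis

text \<open>Sufficiency: scalings related by a nonzero signed power are conjugate.  For a negative
  exponent, compose the positive power with the inversion.\<close>
lemma top_conjugate_scale_if_spow:
  assumes "g \<noteq> 0" and "\<forall>r\<in>I. l r \<noteq> 0 \<and> m r = spow g (l r)"
  shows "top_conjugate I (\<lambda>r. scale (l r)) (\<lambda>r. scale (m r))"
proof (cases "g > 0")
  case True thus ?thesis using assms(2) by (simp add: top_conjugate_scale_spow)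
next
  case False
  hence pos: "- g > 0" using assms(1) by simp
  have "top_conjugate I (\<lambda>r. scale (l r)) (\<lambda>r. scale (spow (- g) (l r)))"
    by (rule top_conjugate_scale_spow[OF pos]) simp
  moreover have "top_conjugate I (\<lambda>r. scale (spow (- g) (l r))) (\<lambda>r. scale (m r))"
    by (rule top_conjugate_scale_inverse)
      (use assms(2) in \<open>simp add: spow_uminus[of "- g", simplified]\<close>)
  ultimately show ?thesis by (rule top_conjugate_trans)
qed

section \<open>Monotone maps intertwining translations\<close>

lemma translation_iterate:
  fixes K :: "real \<Rightarrow> real"
  assumes tr: "\<And>u. K (u + a) = K u + b"
  shows "K (u + of_int n * a) = K u + of_int n * b"
proof -
  have nat: "K (v + of_nat k * a) = K v + of_nat k * b" for v k
  proof (induction k)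
    case (Suc k)
    have "K (v + of_nat (Suc k) * a) = K ((v + of_nat k * a) + a)" by (simp add: algebra_simps)
    also have "\<dots> = K (v + of_nat k * a) + b" by (rule tr)
    also have "\<dots> = K v + of_nat (Suc k) * b" using Suc by (simp add: algebra_simps)
    finally show ?case .
  qed simp
  show ?thesis
  proof (cases "n \<ge> 0")
    case True
    then obtain k where "n = int k" by (metis nonneg_eq_int)
    thus ?thesis using nat by simp
  next
    case False
    then obtain k where k: "n = - int k" by (metis neg_int_cases nat_less_le not_le)
    have "K ((u - of_nat k * a) + of_nat k * a) = K (u - of_nat k * a) + of_nat k * b" by (rule nat)
    thus ?thesis using k by simp
  qed
qed

text \<open>An increasing map carrying translation by \<open>a\<close> to translation by \<open>b\<close> and by
  \<open>a0 > 0\<close> to \<open>b0\<close> satisfies \<open>b / b0 = a / a0\<close>: it preserves the order of all integer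
  combinations \<open>m a\<close>, \<open>n a0\<close>, and the rationals are dense.\<close>
lemma increasing_translation_rigid:
  fixes K :: "real \<Rightarrow> real"
  assumes mono: "\<And>x y. x < y \<Longrightarrow> K x < K y"
    and tr: "\<And>u. K (u + a) = K u + b" and tr0: "\<And>u. K (u + a0) = K u + b0" and a0: "a0 > 0"
  shows "b * a0 = b0 * a"
proof -
  have b0: "b0 > 0" using mono[of 0 a0] tr0[of 0] a0 by simp
  have order: "of_int m * b < of_int n * b0" if "of_int m * a < of_int n * a0" for m n :: int
    using mono[OF that] translation_iterate[of K a b 0 m, OF tr]
      translation_iterate[of K a0 b0 0 n, OF tr0] by simp
  show ?thesis
  proof (rule ccontr)
    assume ne: "b * a0 \<noteq> b0 * a"
    show False
    proof (cases "a / a0 < b / b0")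
      case True
      then obtain q where q: "q \<in> \<rat>" "a / a0 < q" "q < b / b0" using Rats_dense_in_real by blast
      then obtain n m :: int where nm: "m > 0" "q = of_int n / of_int m" by (metis Rats_cases')
      have "of_int m * a < of_int n * a0" using q(2) nm a0 by (simp add: field_simps)
      hence "of_int m * b < of_int n * b0" by (rule order)
      thus False using q(3) nm b0 by (simp add: field_simps)
    next
      case False
      hence "b / b0 < a / a0" using ne a0 b0 by (simp add: field_simps)
      then obtain q where q: "q \<in> \<rat>" "b / b0 < q" "q < a / a0" using Rats_dense_in_real by blast
      then obtain n m :: int where nm: "m > 0" "q = of_int n / of_int m" by (metis Rats_cases')
      have "of_int n * a0 < of_int m * a" using q(3) nm a0 by (simp add: field_simps)
      hence "of_int (-m) * a < of_int (-n) * a0" by simp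
      hence "of_int (-m) * b < of_int (-n) * b0" by (rule order)
      thus False using q(2) nm b0 by (simp add: field_simps)
    qed
  qed
qed

lemma monotone_translation_rigid:
  fixes K :: "real \<Rightarrow> real"
  assumes mono: "strict_mono_on UNIV K \<or> strict_antimono_on UNIV K"
    and tr: "\<And>u. K (u + a) = K u + b" and tr0: "\<And>u. K (u + a0) = K u + b0" and a0: "a0 \<noteq> 0"
  shows "b * a0 = b0 * a"
proof -
  have increasing: "b' * a0 = b0' * a"
    if inc: "\<And>x y. x < y \<Longrightarrow> K' x < K' y" and tr': "\<And>u. K' (u + a) = K' u + b'"
      and tr0': "\<And>u. K' (u + a0) = K' u + b0'" for K' :: "real \<Rightarrow> real" and b' b0'
  proof (cases "a0 > 0")
    case True show ?thesis by (rule increasing_translation_rigid[of K' a b' a0 b0', OF inc tr' tr0' True])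
  next
    case False
    hence pos: "- a0 > 0" using a0 by simp
    have tr0_neg: "K' (u + - a0) = K' u + - b0'" for u using tr0'[of "u - a0"] by simp
    have "b' * (- a0) = (- b0') * a"
      by (rule increasing_translation_rigid[of K' a b' "- a0" "- b0'", OF inc tr' tr0_neg pos])
    thus ?thesis by simp
  qed
  from mono show ?thesis
  proof
    assume "strict_mono_on UNIV K"
    thus ?thesis using increasing[OF _ tr tr0] by (simp add: strict_mono_on_def)
  next
    assume "strict_antimono_on UNIV K"
    hence "\<And>x y. x < y \<Longrightarrow> - K x < - K y" by (simp add: monotone_on_def)
    moreover have "- K (u + a) = - K u + - b" and "- K (u + a0) = - K u + - b0" for u
      by (simp_all add: tr tr0)
    ultimately have "(- b) * a0 = (- b0) * a" by (rule increasing)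
    thus ?thesis by simp
  qed
qed

section \<open>Necessity of the power relation\<close>

lemma conjugate_unit_scale:
  assumes hom: "homeomorphism UNIV UNIV h h'"
    and l: "l = 1 \<or> l = -1" and eq: "\<forall>z. h (scale l z) = scale m (h z)"
  shows "m = l"
proof -
  have h'h: "\<And>x. h' (h x) = x" and hh': "\<And>y. h (h' y) = y"
    using hom by (auto simp: homeomorphism_def)
  have hz: "h (h' (Fin 1)) = Fin 1" by (rule hh')
  show ?thesis using l
  proof
    assume l1: "l = 1"
    have "h (h' (Fin 1)) = scale m (h (h' (Fin 1)))" using eq l1 by simp
    thus ?thesis using hz l1 by simp
  next
    assume l1: "l = -1"
    have "h (scale l (scale l (h' (Fin 1)))) = scale m (scale m (h (h' (Fin 1))))" using eq by simp
    hence "Fin 1 = scale (m * m) (Fin 1)" using l1 hz by (simp add: scale_scale)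
    hence "m = 1 \<or> m = -1" by (simp add: square_eq_1_iff)
    moreover have "m \<noteq> 1"
    proof
      assume "m = 1"
      hence "h' (h (scale l (Fin 1))) = h' (h (Fin 1))" using eq[rule_format, of "Fin 1"] by simp
      thus False using l1 h'h by simp
    qed
    ultimately show ?thesis using l1 by simp
  qed
qed

text \<open>If \<open>|l| \<noteq> 1\<close>, the only fixed points of the scaling by \<open>l\<close> are \<open>0\<close> and \<open>\<infinity>\<close>, and a
  conjugacy to a scaling must permute them.\<close>
lemma conjugate_scale_fixes_zero_infty:
  assumes hom: "homeomorphism UNIV UNIV h h'"
    and L: "\<bar>l\<bar> \<noteq> 1" and eq: "\<forall>z. h (scale l z) = scale m (h z)"
  shows "h (Fin 0) \<in> {Fin 0, Infty}" and "h Infty \<in> {Fin 0, Infty}"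
proof -
  have h'h: "\<And>x. h' (h x) = x" using hom by (auto simp: homeomorphism_def)
  have "m \<noteq> 1"
  proof
    assume "m = 1"
    hence "h' (h (scale l (Fin 1))) = h' (h (Fin 1))" using eq[rule_format, of "Fin 1"] by simp
    thus False using L h'h by simp
  qed
  have fixed: "h x \<in> {Fin 0, Infty}" if "scale l x = x" for x
  proof (cases "h x")
    case (Fin y)
    have "h x = scale m (h x)" using eq that by metis
    hence "(m - 1) * y = 0" using Fin by (simp add: algebra_simps)
    thus ?thesis using \<open>m \<noteq> 1\<close> Fin by simp
  qed simp
  show "h (Fin 0) \<in> {Fin 0, Infty}" and "h Infty \<in> {Fin 0, Infty}" by (rule fixed, simp)+
qed

lemma punctured_restriction:
  assumes hom: "homeomorphism UNIV UNIV h h'"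
    and h0: "h (Fin 0) \<in> {Fin 0, Infty}" and hI: "h Infty \<in> {Fin 0, Infty}"
  obtains k where "\<forall>y. y \<noteq> 0 \<longrightarrow> h (Fin y) = Fin (k y) \<and> k y \<noteq> 0"
    and "\<forall>t. t \<noteq> 0 \<longrightarrow> (\<exists>y. y \<noteq> 0 \<and> k y = t)"
    and "continuous_on (-{0}) k" and "inj_on k (-{0})"
proof -
  have h'h: "\<And>x. h' (h x) = x" and hh': "\<And>y. h (h' y) = y" and ch: "continuous_on UNIV h"
    using hom by (auto simp: homeomorphism_def)
  have inj: "x = x'" if "h x = h x'" for x x' using h'h that by metis
  have ne: "h (Fin 0) \<noteq> h Infty" using inj by blast
  define k where "k y = (case h (Fin y) of Fin t \<Rightarrow> t | Infty \<Rightarrow> 0)" for y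
  have hk: "h (Fin y) = Fin (k y) \<and> k y \<noteq> 0" if y: "y \<noteq> 0" for y
  proof -
    have "h (Fin y) \<notin> {Fin 0, Infty}"
    proof
      assume "h (Fin y) \<in> {Fin 0, Infty}"
      hence "h (Fin y) = h (Fin 0) \<or> h (Fin y) = h Infty" using h0 hI ne by auto
      thus False using inj y by blast
    qed
    then obtain t where "h (Fin y) = Fin t" "t \<noteq> 0" by (cases "h (Fin y)") auto
    thus ?thesis by (simp add: k_def)
  qed
  have onto: "\<exists>y. y \<noteq> 0 \<and> k y = t" if t: "t \<noteq> 0" for t
  proof -
    have "h' (Fin t) \<notin> {Fin 0, Infty}"
    proof
      assume "h' (Fin t) \<in> {Fin 0, Infty}"
      hence "Fin t \<in> {Fin 0, Infty}" using h0 hI hh'[of "Fin t"] by auto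
      thus False using t by simp
    qed
    then obtain y where y: "h' (Fin t) = Fin y" "y \<noteq> 0" by (cases "h' (Fin t)") auto
    have "Fin (k y) = Fin t" using hk[OF y(2)] hh'[of "Fin t"] y(1) by simp
    thus ?thesis using y by auto
  qed
  have "inj_on k (-{0})"
  proof (rule inj_onI)
    fix y y' assume "y \<in> -{0}" "y' \<in> -{0}" "k y = k y'"
    hence "h (Fin y) = h (Fin y')" using hk by simp
    thus "y = y'" using inj by blast
  qed
  moreover have "continuous_on (-{0}) k"
    unfolding continuous_on_open_vimage[OF open_Compl[OF closed_singleton]]
  proof (intro allI impI)
    fix B :: "real set" assume B: "open B"
    have "open (Fin ` B)" using B by (auto simp: open_pline_def vimage_def image_iff)
    hence "open (Fin -` (h -` (Fin ` B)))"
      using ch by (simp add: continuous_on_open_vimage open_Fin_vimage)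
    moreover have "k -` B \<inter> - {0} = Fin -` (h -` (Fin ` B)) \<inter> -{0}"
      using hk by auto
    ultimately show "open (k -` B \<inter> - {0})" by auto
  qed
  ultimately show ?thesis using that hk onto by blast
qed

text \<open>A continuous function without zeros on the punctured line has constant sign on each
  half-line (intermediate value theorem).\<close>
lemma sgn_eq_same_side:
  fixes k :: "real \<Rightarrow> real"
  assumes kc: "continuous_on (-{0}) k" and nz: "\<forall>y. y \<noteq> 0 \<longrightarrow> k y \<noteq> 0"
    and ab: "(a > 0 \<and> b > 0) \<or> (a < 0 \<and> b < 0)"
  shows "sgn (k a) = sgn (k b)"
proof -
  have pos: "k x * k y > 0" if xy: "x \<le> y" "(x > 0 \<and> y > 0) \<or> (x < 0 \<and> y < 0)" for x y
  proof (rule ccontr)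
    have c: "continuous_on {x..y} k" using continuous_on_subset[OF kc] xy by auto
    assume "\<not> k x * k y > 0"
    hence "(k x \<le> 0 \<and> 0 \<le> k y) \<or> (k y \<le> 0 \<and> 0 \<le> k x)" by (auto simp: zero_less_mult_iff)
    then obtain z where "x \<le> z" "z \<le> y" "k z = 0"
      using IVT'[of k x 0 y, OF _ _ xy(1) c] IVT2'[of k y 0 x, OF _ _ xy(1) c] by blast
    moreover have "z \<noteq> 0" using \<open>x \<le> z\<close> \<open>z \<le> y\<close> xy by auto
    ultimately show False using nz by auto
  qed
  have "k a * k b > 0"
    using pos[of a b] pos[of b a] ab by (cases "a \<le> b") (auto simp: mult.commute)
  thus ?thesis by (auto simp: zero_less_mult_iff sgn_if)
qed

lemma sgn_punctured_homeomorphism: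
  fixes k :: "real \<Rightarrow> real"
  assumes kc: "continuous_on (-{0}) k" and nz: "\<forall>y. y \<noteq> 0 \<longrightarrow> k y \<noteq> 0"
    and onto: "\<forall>t. t \<noteq> 0 \<longrightarrow> (\<exists>y. y \<noteq> 0 \<and> k y = t)" and y: "y \<noteq> 0"
  shows "sgn (k y) = sgn y * sgn (k 1)"
proof -
  have k1: "k 1 \<noteq> 0" using nz by simp
  have pos: "sgn (k y) = sgn (k 1)" if "y > 0" for y
    by (rule sgn_eq_same_side[OF kc nz]) (use that in simp)
  have neg: "sgn (k y) = sgn (k (-1))" if "y < 0" for y
    by (rule sgn_eq_same_side[OF kc nz]) (use that in simp)
  \<comment> \<open>the value \<open>- k 1\<close> is attained, necessarily on the negative half-line\<close>
  obtain z where z: "z \<noteq> 0" "k z = - k 1" using onto k1 by (metis neg_equal_0_iff_equal)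
  have "z < 0" using pos[of z] z k1 by (cases "z > 0") (auto simp: sgn_minus sgn_zero_iff)
  hence opp: "sgn (k (-1)) = - sgn (k 1)" using neg[of z] z by (simp add: sgn_minus)
  show ?thesis
  proof (cases "y > 0")
    case True thus ?thesis using pos[OF True] by simp
  next
    case False thus ?thesis using neg[of y] opp y by simp
  qed
qed

lemma sgn_multiplier:
  fixes k :: "real \<Rightarrow> real"
  assumes kc: "continuous_on (-{0}) k" and nz: "\<forall>y. y \<noteq> 0 \<longrightarrow> k y \<noteq> 0"
    and onto: "\<forall>t. t \<noteq> 0 \<longrightarrow> (\<exists>y. y \<noteq> 0 \<and> k y = t)"
    and eq: "k l = m * k 1" and l: "l \<noteq> 0"
  shows "sgn m = sgn l"
proof -
  have "sgn l * sgn (k 1) = sgn m * sgn (k 1)"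
    using sgn_punctured_homeomorphism[OF kc nz onto l] eq by (auto simp: sgn_mult)
  moreover have "sgn (k 1) \<noteq> 0" using nz by (simp add: sgn_zero_iff)
  ultimately show ?thesis by auto
qed

lemma log_multipliers_proportional:
  fixes K :: "real \<Rightarrow> real"
  assumes cont: "continuous_on UNIV K" and inj: "inj K"
    and tr: "\<forall>r\<in>I. \<forall>u. K (u + 2 * ln \<bar>l r\<bar>) = K u + 2 * ln \<bar>m r\<bar>"
    and r0: "r0 \<in> I" and l0: "l r0 \<noteq> 0" and L: "\<bar>l r0\<bar> \<noteq> 1"
  shows "\<exists>c. c \<noteq> 0 \<and> (\<forall>r\<in>I. ln \<bar>m r\<bar> = c * ln \<bar>l r\<bar>)"
proof -
  have mono: "strict_mono_on UNIV K \<or> strict_antimono_on UNIV K"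
    using injective_eq_monotone_map[of UNIV K] cont inj by simp
  define a0 where "a0 = 2 * ln \<bar>l r0\<bar>"
  define b0 where "b0 = 2 * ln \<bar>m r0\<bar>"
  have a0: "a0 \<noteq> 0" using L l0 by (simp add: a0_def)
  have tr0: "K (u + a0) = K u + b0" for u using tr r0 by (simp add: a0_def b0_def)
  have b0: "b0 \<noteq> 0"
  proof
    assume "b0 = 0"
    hence "K (0 + a0) = K 0" using tr0[of 0] by simp
    hence "0 + a0 = 0" using inj by (meson injD)
    thus False using a0 by simp
  qed
  show ?thesis
  proof (intro exI conjI ballI)
    show "b0 / a0 \<noteq> 0" using a0 b0 by simp
    fix r assume r: "r \<in> I"
    have "(2 * ln \<bar>m r\<bar>) * a0 = b0 * (2 * ln \<bar>l r\<bar>)"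
      by (rule monotone_translation_rigid[OF mono _ tr0 a0]) (use tr r in simp)
    thus "ln \<bar>m r\<bar> = b0 / a0 * ln \<bar>l r\<bar>" using a0 by (simp add: field_simps)
  qed
qed

text \<open>A homeomorphism \<open>k\<close> of the punctured line intertwining the scalings by \<open>l r\<close> and by
  \<open>m r\<close>, with some \<open>|l r| \<noteq> 1\<close>, forces \<open>m r = spow g (l r)\<close>: the signs agree, and
  \<open>K u = ln |k (exp u)|\<close> intertwines the logarithms of the moduli (of the squares, to stay
  on the positive half-line).\<close>
lemma punctured_conjugacy_spow:
  fixes k :: "real \<Rightarrow> real"
  assumes kc: "continuous_on (-{0}) k" and ki: "inj_on k (-{0})"
    and knz: "\<forall>y. y \<noteq> 0 \<longrightarrow> k y \<noteq> 0" and onto: "\<forall>t. t \<noteq> 0 \<longrightarrow> (\<exists>y. y \<noteq> 0 \<and> k y = t)"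
    and keq: "\<forall>r\<in>I. \<forall>y. y \<noteq> 0 \<longrightarrow> k (l r * y) = m r * k y"
    and nz: "\<forall>r\<in>I. l r \<noteq> 0 \<and> m r \<noteq> 0" and r0: "r0 \<in> I" and L: "\<bar>l r0\<bar> \<noteq> 1"
  shows "\<exists>g. g \<noteq> 0 \<and> (\<forall>r\<in>I. m r = spow g (l r))"
proof -
  define K where "K u = ln \<bar>k (exp u)\<bar>" for u
  have kexp: "k (exp u) \<noteq> 0" for u using knz by simp
  have cont: "continuous_on UNIV K"
  proof -
    have "continuous_on UNIV (\<lambda>u. k (exp u))"
      by (rule continuous_on_compose2[OF kc]) (auto intro: continuous_intros)
    thus ?thesis unfolding K_def[abs_def] using kexp by (intro continuous_intros) auto
  qed
  have inj: "inj K"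
  proof (rule injI)
    fix u v assume "K u = K v"
    hence "\<bar>k (exp u)\<bar> = \<bar>k (exp v)\<bar>" using kexp by (simp add: K_def)
    moreover have "sgn (k (exp u)) = sgn (k (exp v))" by (rule sgn_eq_same_side[OF kc knz]) simp
    ultimately have "k (exp u) = k (exp v)" by (metis sgn_mult_abs)
    hence "exp u = exp v" by (rule inj_onD[OF ki]) simp_all
    thus "u = v" by simp
  qed
  have tr: "K (u + 2 * ln \<bar>l r\<bar>) = K u + 2 * ln \<bar>m r\<bar>" if r: "r \<in> I" for r u
  proof -
    have l0: "l r \<noteq> 0" and m0: "m r \<noteq> 0" using nz r by auto
    have "exp (u + 2 * ln \<bar>l r\<bar>) = exp u * (exp (ln \<bar>l r\<bar>) * exp (ln \<bar>l r\<bar>))"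
      by (simp add: exp_add[symmetric] algebra_simps)
    also have "\<dots> = l r * (l r * exp u)" using l0 by simp
    moreover have "k (l r * (l r * exp u)) = m r * (m r * k (exp u))" using keq r l0 by simp
    ultimately show ?thesis using m0 kexp by (simp add: K_def abs_mult ln_mult)
  qed
  obtain c where c: "c \<noteq> 0" "\<forall>r\<in>I. ln \<bar>m r\<bar> = c * ln \<bar>l r\<bar>"
    using log_multipliers_proportional[of K I l m r0, OF cont inj _ r0 _ L] tr nz r0 by blast
  show ?thesis
  proof (intro exI conjI ballI)
    fix r assume r: "r \<in> I"
    have l0: "l r \<noteq> 0" and m0: "m r \<noteq> 0" using nz r by auto
    have "\<bar>m r\<bar> = exp (ln \<bar>m r\<bar>)" using m0 by simp
    also have "\<dots> = \<bar>l r\<bar> powr c" using c(2) r l0 by (simp add: powr_def mult.commute)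
    moreover have "sgn (m r) = sgn (l r)"
      by (rule sgn_multiplier[OF kc knz onto _ l0]) (use keq[rule_format, OF r, of 1] in simp)
    ultimately show "m r = spow c (l r)" by (metis sgn_mult_abs spow_def)
  qed (rule c(1))
qed

lemma spow_if_top_conjugate_scale:
  assumes conj: "top_conjugate I (\<lambda>r. scale (l r)) (\<lambda>r. scale (m r))"
    and nz: "\<forall>r\<in>I. l r \<noteq> 0 \<and> m r \<noteq> 0"
  shows "\<exists>g. g \<noteq> 0 \<and> (\<forall>r\<in>I. m r = spow g (l r))"
proof -
  obtain h h' where hom: "homeomorphism UNIV UNIV h h'"
    and eq: "\<forall>r\<in>I. \<forall>z. h (scale (l r) z) = scale (m r) (h z)"
    using conj by (auto simp: top_conjugate_def)
  show ?thesis
  proof (cases "\<forall>r\<in>I. \<bar>l r\<bar> = 1")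
    case True
    have "m r = spow 1 (l r)" if r: "r \<in> I" for r
    proof -
      have "l r = 1 \<or> l r = -1" using True r by (auto simp: abs_if split: if_splits)
      hence "m r = l r" using conjugate_unit_scale[OF hom] eq r by blast
      thus ?thesis using nz r by (simp add: spow_def sgn_mult_abs)
    qed
    thus ?thesis by (intro exI[of _ 1]) simp
  next
    case False
    then obtain r0 where r0: "r0 \<in> I" "\<bar>l r0\<bar> \<noteq> 1" by blast
    have eq0: "\<forall>z. h (scale (l r0) z) = scale (m r0) (h z)" using eq r0 by blast
    obtain k where hk: "\<forall>y. y \<noteq> 0 \<longrightarrow> h (Fin y) = Fin (k y) \<and> k y \<noteq> 0"
      and onto: "\<forall>t. t \<noteq> 0 \<longrightarrow> (\<exists>y. y \<noteq> 0 \<and> k y = t)"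
      and kc: "continuous_on (-{0}) k" and ki: "inj_on k (-{0})"
      using punctured_restriction[OF hom conjugate_scale_fixes_zero_infty[OF hom r0(2) eq0]] .
    have keq: "\<forall>r\<in>I. \<forall>y. y \<noteq> 0 \<longrightarrow> k (l r * y) = m r * k y"
    proof (intro ballI allI impI)
      fix r and y :: real assume r: "r \<in> I" and y: "y \<noteq> 0"
      have "h (scale (l r) (Fin y)) = scale (m r) (h (Fin y))" using eq r by blast
      thus "k (l r * y) = m r * k y" using hk nz r y by simp
    qed
    show ?thesis by (rule punctured_conjugacy_spow[OF kc ki _ onto keq nz r0]) (use hk in blast)
  qed
qed

lemma top_conjugate_scale_iff:
  assumes "\<forall>r\<in>I. l r \<noteq> 0 \<and> m r \<noteq> 0"
  shows "top_conjugate I (\<lambda>r. scale (l r)) (\<lambda>r. scale (m r))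
    \<longleftrightarrow> (\<exists>g. g \<noteq> 0 \<and> (\<forall>r\<in>I. m r = spow g (l r)))"
  using assms spow_if_top_conjugate_scale top_conjugate_scale_if_spow by metis

theorem theorem12p1:
  fixes I :: "'i set" and S T :: "real^2^2" and p1 p2 q1 q2 :: "'i \<Rightarrow> real"
  assumes "invertible S" and "invertible T"
    and "\<forall>r\<in>I. p1 r \<noteq> 0 \<and> p2 r \<noteq> 0 \<and> q1 r \<noteq> 0 \<and> q2 r \<noteq> 0"
  shows "(\<exists>f g. homeomorphism (UNIV :: pline set) UNIV f g \<and>
            (\<forall>r\<in>I. \<forall>x. f (mobius (S ** diag2 (p1 r) (p2 r) ** matrix_inv S) x)
                       = mobius (T ** diag2 (q1 r) (q2 r) ** matrix_inv T) (f x)))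
         \<longleftrightarrow> (\<exists>\<alpha>::real. \<alpha> \<noteq> -1 \<and>
               (\<forall>r\<in>I. q1 r / q2 r = (p1 r / p2 r) * \<bar>p1 r / p2 r\<bar> powr \<alpha>))"
proof -
  define l where "l r = p1 r / p2 r" for r
  define m where "m r = q1 r / q2 r" for r
  have nz: "\<forall>r\<in>I. l r \<noteq> 0 \<and> m r \<noteq> 0" using assms(3) by (simp add: l_def m_def)
  have S: "top_conjugate I (\<lambda>r. scale (l r)) (\<lambda>r. mobius (S ** diag2 (p1 r) (p2 r) ** matrix_inv S))"
    unfolding l_def by (rule top_conjugate_scale_mobius) (use assms in auto)
  have T: "top_conjugate I (\<lambda>r. scale (m r)) (\<lambda>r. mobius (T ** diag2 (q1 r) (q2 r) ** matrix_inv T))"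
    unfolding m_def by (rule top_conjugate_scale_mobius) (use assms in auto)
  have "top_conjugate I (\<lambda>r. mobius (S ** diag2 (p1 r) (p2 r) ** matrix_inv S))
          (\<lambda>r. mobius (T ** diag2 (q1 r) (q2 r) ** matrix_inv T))
      \<longleftrightarrow> top_conjugate I (\<lambda>r. scale (l r)) (\<lambda>r. scale (m r))"
    using S T top_conjugate_sym top_conjugate_trans by meson
  also have "\<dots> \<longleftrightarrow> (\<exists>g. g \<noteq> 0 \<and> (\<forall>r\<in>I. m r = spow g (l r)))"
    by (rule top_conjugate_scale_iff[OF nz])
  also have "\<dots> \<longleftrightarrow> (\<exists>\<alpha>. \<alpha> \<noteq> -1 \<and> (\<forall>r\<in>I. m r = l r * \<bar>l r\<bar> powr \<alpha>))"
  proof -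
    have "(\<forall>r\<in>I. m r = spow (1 + \<alpha>) (l r)) \<longleftrightarrow> (\<forall>r\<in>I. m r = l r * \<bar>l r\<bar> powr \<alpha>)" for \<alpha>
      using nz by (simp add: mult_abs_powr_eq_spow)
    moreover have "(\<exists>g. g \<noteq> 0 \<and> P g) \<longleftrightarrow> (\<exists>\<alpha>. \<alpha> \<noteq> -1 \<and> P (1 + \<alpha>))" for P :: "real \<Rightarrow> bool"
      by (metis add.commute diff_add_cancel add_cancel_right_left eq_neg_iff_add_eq_0)
    ultimately show ?thesis by presburger
  qed
  finally show ?thesis by (simp add: top_conjugate_def l_def m_def)
qed

end
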